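(* Let $T$ and $\tilde T$ be positive integers, $\theta>0$ a firing threshold, and $\psi\in\mathbb{R}$ a shift. Consider a single neuron of the $l$-th layer whose input currents over $T$ time-steps form a vector $\mathbf{I}=(I^{1},\dots,I^{T})^{\top}\in\mathbb{R}^{T}$ with average $z=\frac{1}{T}\sum_{t=1}^{T}I^{t}$ (so $z$ plays the role of $\mathbf{W}^l\mathbf{r}^{(l-1),T}$). Define the parallel conversion matrix $\mathbf{\Lambda}_{\mathrm{pc}}\in\mathbb{R}^{T\times T}$ by $(\mathbf{\Lambda}_{\mathrm{pc}})_{x,j}=\frac{1}{T-x+1}$ for all $x,j\in\{1,\dots,T\}$, and the shift vector $$\mathbf{b}=\Big[\tfrac{\psi}{T},\ \dots,\ \tfrac{\psi}{T-x+1},\ \dots,\ \psi\Big]^{\top}\in\mathbb{R}^{T},\qquad b_x=\frac{\psi}{T-x+1}.$$ The parallel spike output is $\mathbf{s}\in\{0,1\}^{T}$ with $s_x=1$ if $(\mathbf{\Lambda}_{\mathrm{pc}}\mathbf{I}+\mathbf{b})_x\ge\theta$ and $s_x=0$ otherwise, and the SNN average firing rate is $r^{T}=\frac{\theta}{T}\sum_{x=1}^{T}s_x$. For a positive integer $N$ define the QCFS output $$r_{\mathrm{QCFS}}^{N}(z)=\frac{\theta}{N}\,\mathrm{Clip}\!\Big(\Big\lfloor\frac{zN+\psi}{\theta}\Big\rfloor,0,N\Big),$$ where $\mathrm{Clip}(a,0,N)=\min(\max(a,0),N)$. Then: (i) If $\tilde T=T$, then $r^{T}=r_{\mathrm{QCFS}}^{\tilde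 T}(z)$ for every input $\mathbf{I}\in\mathbb{R}^T$. (ii) If $\tilde T\neq T$ and $\psi=\theta/2$, and $z$ is a random variable uniformly distributed on $[0,\theta]$ (with $\mathbf{I}$ any input vector with average $z$), then $\mathbb{E}\big(r^{T}-r_{\mathrm{QCFS}}^{\tilde T}(z)\big)=0$.
   Context: In the converted spiking network, each spiking neuron layer computes all $T$ time-steps at once ("parallel inference"): the vector of membrane values is $\mathbf{\Lambda}_{\mathrm{pc}}\mathbf{I}+\mathbf{b}$ and a spike is emitted at step $x$ exactly when the $x$-th entry reaches the threshold $\theta$; there is no reset phase. The QCFS (Quantization-Clip-Floor-Shift) function with $N$ quantization levels is the ANN activation $r_{\mathrm{QCFS}}^{N}$ defined in the claim, applied to the pre-activation $z$. All statements are per neuron (elementwise for a layer). *)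

theory Defs
  imports "HOL-Probability.Probability"
begin

text \<open>Vectors in R^T are functions nat => real indexed by 1..T.\<close>

definition Lambda_pc :: "nat \<Rightarrow> nat \<Rightarrow> nat \<Rightarrow> real" where
  "Lambda_pc T x j = 1 / (real T - real x + 1)"

definition shift_vec :: "nat \<Rightarrow> real \<Rightarrow> nat \<Rightarrow> real" where
  "shift_vec T \<psi> x = \<psi> / (real T - real x + 1)"

definition membrane :: "nat \<Rightarrow> real \<Rightarrow> (nat \<Rightarrow> real) \<Rightarrow> nat \<Rightarrow> real" where
  "membrane T \<psi> I x = (\<Sum>j=1..T. Lambda_pc T x j * I j) + shift_vec T \<psi> x"

definition spike :: "nat \<Rightarrow> real \<Rightarrow> real \<Rightarrow> (nat \<Rightarrow> real) \<Rightarrow> nat \<Rightarrow> real" where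
  "spike T \<theta> \<psi> I x = (if membrane T \<psi> I x \<ge> \<theta> then 1 else 0)"

definition snn_rate :: "nat \<Rightarrow> real \<Rightarrow> real \<Rightarrow> (nat \<Rightarrow> real) \<Rightarrow> real" where
  "snn_rate T \<theta> \<psi> I = \<theta> / real T * (\<Sum>x=1..T. spike T \<theta> \<psi> I x)"

definition avg_input :: "nat \<Rightarrow> (nat \<Rightarrow> real) \<Rightarrow> real" where
  "avg_input T I = (\<Sum>t=1..T. I t) / real T"

definition clip :: "int \<Rightarrow> int \<Rightarrow> int \<Rightarrow> int" where
  "clip a lo hi = min (max a lo) hi"

definition qcfs :: "nat \<Rightarrow> real \<Rightarrow> real \<Rightarrow> real \<Rightarrow> real" where
  "qcfs N \<theta> \<psi> z = \<theta> / real N * real_of_int (clip \<lfloor>(z * real N + \<psi>) / \<theta>\<rfloor> 0 (int N))"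

end

theory Submission
  imports Defs
begin

text \<open>
  (i) Every row of \<open>\<Lambda>\<^sub>p\<^sub>c\<close> is constant, so the membrane value at step \<open>x\<close> is
  \<open>(T z + \<psi>) / (T - x + 1)\<close>, which increases with \<open>x\<close>: the neuron fires exactly at the last
  \<open>clip \<lfloor>(T z + \<psi>)/\<theta>\<rfloor> 0 T\<close> steps, which is the QCFS output with \<open>N = T\<close>.
  (ii) For \<open>\<psi> = \<theta>/2\<close> the QCFS function satisfies \<open>r(z) + r(\<theta> - z) = \<theta>\<close> for all but countably
  many \<open>z \<in> [0, \<theta>]\<close>; since the uniform distribution on \<open>[0, \<theta>]\<close> is invariant under
  \<open>z \<mapsto> \<theta> - z\<close>, the mean of \<open>r\<close> is \<open>\<theta>/2\<close> for every number \<open>N\<close> of levels. By (i) the SNN rate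
  is the QCFS output with \<open>T\<close> levels, so both means agree.
\<close>

lemma membrane_eq_div:
  assumes "x \<le> T"
  shows "membrane T \<psi> I x = ((\<Sum>j=1..T. I j) + \<psi>) / (real T - real x + 1)"
  unfolding membrane_def Lambda_pc_def shift_vec_def
  by (simp add: sum_divide_distrib[symmetric] add_divide_distrib)

lemma spike_eq_floor:
  assumes "\<theta> > 0" and x: "x \<in> {1..T}"
  shows "spike T \<theta> \<psi> I x
    = (if int T - int x < \<lfloor>((\<Sum>j=1..T. I j) + \<psi>) / \<theta>\<rfloor> then 1 else 0)"
proof -
  define a where "a = ((\<Sum>j=1..T. I j) + \<psi>) / \<theta>"
  have "membrane T \<psi> I x \<ge> \<theta> \<longleftrightarrow> real T - real x + 1 \<le> a"
    using assms by (simp add: membrane_eq_div a_def pos_le_divide_eq mult.commute)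
  also have "\<dots> \<longleftrightarrow> of_int (int T - int x + 1) \<le> a"
    using x by simp
  also have "\<dots> \<longleftrightarrow> int T - int x + 1 \<le> \<lfloor>a\<rfloor>"
    by (rule le_floor_iff[symmetric])
  also have "\<dots> \<longleftrightarrow> int T - int x < \<lfloor>a\<rfloor>"
    by linarith
  finally show ?thesis
    unfolding spike_def a_def by simp
qed

lemma card_suffix_eq_clip:
  "card {x \<in> {1..T}. int T - int x < k} = nat (clip k 0 (int T))"
proof -
  have "{x \<in> {1..T}. int T - int x < k} = {T + 1 - nat (clip k 0 (int T))..T}"
    unfolding clip_def by auto
  then show ?thesis
    unfolding clip_def by auto
qed

theorem snn_rate_eq_qcfs:
  assumes "T > 0" and "\<theta> > 0"
  shows "snn_rate T \<theta> \<psi> I = qcfs T \<theta> \<psi> (avg_input T I)"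
proof -
  define k where "k = \<lfloor>((\<Sum>j=1..T. I j) + \<psi>) / \<theta>\<rfloor>"
  have "(\<Sum>x=1..T. spike T \<theta> \<psi> I x) = (\<Sum>x=1..T. if int T - int x < k then 1 else 0)"
    using assms(2) by (intro sum.cong) (simp_all add: spike_eq_floor k_def)
  also have "\<dots> = real (card {x \<in> {1..T}. int T - int x < k})"
    by (simp add: sum.If_cases Int_def conj_commute)
  also have "\<dots> = real_of_int (clip k 0 (int T))"
    unfolding card_suffix_eq_clip by (simp add: clip_def)
  finally show ?thesis
    using assms(1) unfolding snn_rate_def qcfs_def k_def avg_input_def by simp
qed

lemma qcfs_measurable [measurable]: "qcfs N \<theta> \<psi> \<in> borel_measurable borel"
  unfolding qcfs_def clip_def by measurable

lemma abs_qcfs_le: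
  assumes "\<theta> > 0" and "N > 0"
  shows "\<bar>qcfs N \<theta> \<psi> z\<bar> \<le> \<theta>"
proof -
  define c where "c = clip \<lfloor>(z * real N + \<psi>) / \<theta>\<rfloor> 0 (int N)"
  have "0 \<le> real_of_int c" "real_of_int c \<le> real N"
    unfolding c_def clip_def by linarith+
  then show ?thesis
    using assms unfolding qcfs_def c_def[symmetric] by (auto simp: abs_mult field_simps)
qed

lemma floor_reflect_not_Ints:
  fixes a :: real
  assumes "a \<notin> \<int>"
  shows "\<lfloor>of_int n + 1 - a\<rfloor> = n - \<lfloor>a\<rfloor>"
proof (rule floor_unique)
  have "of_int \<lfloor>a\<rfloor> \<noteq> a"
    using assms by (metis Ints_of_int)
  then have "of_int \<lfloor>a\<rfloor> < a"
    using of_int_floor_le[of a] by linarith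
  then show "of_int n + 1 - a < of_int (n - \<lfloor>a\<rfloor>) + 1"
    by simp
  show "of_int (n - \<lfloor>a\<rfloor>) \<le> of_int n + 1 - a"
    using real_of_int_floor_add_one_gt[of a] by simp linarith
qed

lemma qcfs_half_shift_reflect:
  assumes "\<theta> > 0" and "N > 0" and "0 \<le> z" "z \<le> \<theta>"
    and "(z * real N + \<theta>/2) / \<theta> \<notin> \<int>"
  shows "qcfs N \<theta> (\<theta>/2) z + qcfs N \<theta> (\<theta>/2) (\<theta> - z) = \<theta>"
proof -
  define a where "a = (z * real N + \<theta>/2) / \<theta>"
  have reflect: "((\<theta> - z) * real N + \<theta>/2) / \<theta> = of_int (int N) + 1 - a"
    using assms(1) by (simp add: a_def field_simps)
  have "1/2 \<le> a" "a \<le> real N + 1/2"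
    using assms(1-4) unfolding a_def by (auto simp: field_simps intro!: mult_right_mono)
  then have "clip \<lfloor>a\<rfloor> 0 (int N) = \<lfloor>a\<rfloor>" "clip (int N - \<lfloor>a\<rfloor>) 0 (int N) = int N - \<lfloor>a\<rfloor>"
    unfolding clip_def by linarith+
  moreover have "\<lfloor>of_int (int N) + 1 - a\<rfloor> = int N - \<lfloor>a\<rfloor>"
    using assms(5) unfolding a_def by (rule floor_reflect_not_Ints)
  ultimately show ?thesis
    using assms(2) unfolding qcfs_def reflect a_def[symmetric]
    by (simp only:) (simp add: field_simps)
qed

lemma countable_affine_preimage_Ints:
  fixes c d :: real
  assumes "c \<noteq> 0"
  shows "countable {z. z * c + d \<in> \<int>}"
proof -
  have "{z. z * c + d \<in> \<int>} = (\<lambda>k. (of_int k - d) / c) ` UNIV"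
    using assms by (auto simp: Ints_def field_simps image_iff)
  then show ?thesis
    by simp
qed

lemma uniform_measure_Icc_eq_density:
  fixes a b :: real
  assumes "a < b"
  shows "uniform_measure lborel {a..b}
    = density lborel (\<lambda>x. ennreal (indicator {a..b} x / (b - a)))"
  unfolding uniform_measure_def using assms
  by (intro arg_cong[where f="density lborel"] ext)
     (auto simp: divide_ennreal split: split_indicator
           intro: divide_ennreal[of 1 "b - a", simplified])

lemma integral_uniform_measure_Icc:
  fixes a b :: real and f :: "real \<Rightarrow> real"
  assumes "a < b" and [measurable]: "f \<in> borel_measurable borel"
  shows "integral\<^sup>L (uniform_measure lborel {a..b}) f
    = (\<integral>x. indicator {a..b} x * f x \<partial>lborel) / (b - a)"
proof -
  have "integral\<^sup>L (uniform_measure lborel {a..b}) f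
      = (\<integral>x. indicator {a..b} x / (b - a) * f x \<partial>lborel)"
    unfolding uniform_measure_Icc_eq_density[OF assms(1)]
    using assms(1) by (subst integral_density) (auto intro!: AE_I2)
  also have "\<dots> = (\<integral>x. indicator {a..b} x * f x \<partial>lborel) / (b - a)"
    by (subst integral_divide_zero[symmetric]) (auto intro!: Bochner_Integration.integral_cong)
  finally show ?thesis .
qed

lemma integrable_indicator_Icc_bounded:
  fixes a b :: real and f :: "real \<Rightarrow> real"
  assumes "f \<in> borel_measurable borel" and "\<And>x. \<bar>f x\<bar> \<le> B"
  shows "integrable lborel (\<lambda>x. indicator {a..b} x * f x)"
  using integrableI_bounded_set_indicator[of "{a..b}" lborel f B] assms
  by (simp add: emeasure_lborel_Icc_eq)

lemma integrable_uniform_measure_Icc_bounded: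
  fixes a b :: real and f :: "real \<Rightarrow> real"
  assumes "a < b" and [measurable]: "f \<in> borel_measurable borel" and "\<And>x. \<bar>f x\<bar> \<le> B"
  shows "integrable (uniform_measure lborel {a..b}) f"
proof -
  have "integrable lborel (\<lambda>x. indicator {a..b} x * (f x / (b - a)))"
    using assms by (intro integrable_indicator_Icc_bounded[where B="B / (b - a)"])
      (auto simp: abs_divide divide_right_mono)
  then have "integrable lborel (\<lambda>x. (indicator {a..b} x / (b - a)) *\<^sub>R f x)"
    by (rule Bochner_Integration.integrable_cong[THEN iffD1, rotated -1]) auto
  then show ?thesis
    unfolding uniform_measure_Icc_eq_density[OF assms(1)] using assms(1)
    by (subst integrable_density) (auto intro!: AE_I2)
qed

lemma integral_uniform_measure_Icc_reflect_sum:
  fixes a b c B :: real and f :: "real \<Rightarrow> real"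
  assumes "a < b" and [measurable]: "f \<in> borel_measurable borel" and "\<And>x. \<bar>f x\<bar> \<le> B"
    and sum_const: "AE x in lborel. x \<in> {a..b} \<longrightarrow> f x + f (a + b - x) = c"
  shows "integral\<^sup>L (uniform_measure lborel {a..b}) f = c / 2"
proof -
  let ?A = "{a..b}"
  define J where "J = (\<integral>x. indicator ?A x * f x \<partial>lborel)"
  have "J = (\<integral>x. indicator ?A (a + b + (-1) * x) * f (a + b + (-1) * x) \<partial>lborel)"
    unfolding J_def by (subst lborel_integral_real_affine[where c="-1" and t="a + b"]) auto
  also have "\<dots> = (\<integral>x. indicator ?A x * f (a + b - x) \<partial>lborel)"
    by (intro Bochner_Integration.integral_cong) (auto split: split_indicator)
  finally have J_reflect: "J = (\<integral>x. indicator ?A x * f (a + b - x) \<partial>lborel)" .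
  have "J + J = (\<integral>x. indicator ?A x * f x \<partial>lborel) + (\<integral>x. indicator ?A x * f (a + b - x) \<partial>lborel)"
    by (subst (2) J_reflect) (simp add: J_def)
  also have "\<dots> = (\<integral>x. indicator ?A x * f x + indicator ?A x * f (a + b - x) \<partial>lborel)"
    using assms(3) by (intro Bochner_Integration.integral_add[symmetric]
        integrable_indicator_Icc_bounded) auto
  also have "\<dots> = (\<integral>x. c * indicator ?A x \<partial>lborel)"
    by (rule integral_cong_AE) (use sum_const in \<open>auto split: split_indicator elim!: AE_mp\<close>)
  also have "\<dots> = c * (b - a)"
    using assms(1) by simp
  finally show ?thesis
    using assms(1) unfolding integral_uniform_measure_Icc[OF assms(1,2)] J_def[symmetric]
    by (simp add: field_simps)
qed

lemma integral_uniform_qcfs_half_shift: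
  assumes "\<theta> > 0" and "N > 0"
  shows "integral\<^sup>L (uniform_measure lborel {0..\<theta>}) (qcfs N \<theta> (\<theta>/2)) = \<theta>/2"
proof (rule integral_uniform_measure_Icc_reflect_sum)
  have affine: "(z * real N + \<theta>/2) / \<theta> = z * (real N / \<theta>) + 1/2" for z
    using assms(1) by (simp add: field_simps)
  have "AE z in lborel. z \<notin> {z. z * (real N / \<theta>) + 1/2 \<in> \<int>}"
    using assms by (intro AE_not_in countable_imp_null_set_lborel countable_affine_preimage_Ints)
      simp
  then have "AE z in lborel. (z * real N + \<theta>/2) / \<theta> \<notin> \<int>"
    by (simp only: affine mem_Collect_eq)
  then show "AE z in lborel. z \<in> {0..\<theta>} \<longrightarrow>
      qcfs N \<theta> (\<theta>/2) z + qcfs N \<theta> (\<theta>/2) (0 + \<theta> - z) = \<theta>"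
    by eventually_elim (use assms qcfs_half_shift_reflect in auto)
qed (use assms abs_qcfs_le in auto)

theorem theorem4p1:
  fixes T Tt :: nat and \<theta> \<psi> :: real
    and M :: "'a measure" and Z :: "'a \<Rightarrow> real" and Ivec :: "'a \<Rightarrow> nat \<Rightarrow> real"
  assumes "T > 0" and "Tt > 0" and "\<theta> > 0"
  shows "(Tt = T \<longrightarrow>
           (\<forall>I. snn_rate T \<theta> \<psi> I = qcfs Tt \<theta> \<psi> (avg_input T I)))
       \<and> ((Tt \<noteq> T \<and> \<psi> = \<theta> / 2 \<and> prob_space M \<and> Z \<in> borel_measurable M
           \<and> distr M lborel Z = uniform_measure lborel {0..\<theta>}
           \<and> (\<forall>\<omega>\<in>space M. avg_input T (Ivec \<omega>) = Z \<omega>)) \<longrightarrow>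
           prob_space.expectation M
             (\<lambda>\<omega>. snn_rate T \<theta> \<psi> (Ivec \<omega>) - qcfs Tt \<theta> \<psi> (Z \<omega>)) = 0)"
proof (intro conjI impI allI)
  fix I assume "Tt = T"
  then show "snn_rate T \<theta> \<psi> I = qcfs Tt \<theta> \<psi> (avg_input T I)"
    using snn_rate_eq_qcfs[OF assms(1,3)] by simp
next
  assume "Tt \<noteq> T \<and> \<psi> = \<theta> / 2 \<and> prob_space M \<and> Z \<in> borel_measurable M
           \<and> distr M lborel Z = uniform_measure lborel {0..\<theta>}
           \<and> (\<forall>\<omega>\<in>space M. avg_input T (Ivec \<omega>) = Z \<omega>)"
  then have \<psi>: "\<psi> = \<theta> / 2" and "prob_space M" and Z: "Z \<in> measurable M lborel"
    and uniform: "distr M lborel Z = uniform_measure lborel {0..\<theta>}"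
    and avg: "\<forall>\<omega>\<in>space M. avg_input T (Ivec \<omega>) = Z \<omega>" by auto
  interpret prob_space M by fact
  let ?U = "uniform_measure lborel {0..\<theta>}"
  have "expectation (\<lambda>\<omega>. snn_rate T \<theta> \<psi> (Ivec \<omega>) - qcfs Tt \<theta> \<psi> (Z \<omega>))
      = expectation (\<lambda>\<omega>. qcfs T \<theta> \<psi> (Z \<omega>) - qcfs Tt \<theta> \<psi> (Z \<omega>))"
    using avg snn_rate_eq_qcfs[OF assms(1,3)] by (intro Bochner_Integration.integral_cong) auto
  also have "\<dots> = (\<integral>z. qcfs T \<theta> \<psi> z - qcfs Tt \<theta> \<psi> z \<partial>?U)"
    unfolding uniform[symmetric] by (rule integral_distr[symmetric, OF Z]) measurable
  also have "\<dots> = integral\<^sup>L ?U (qcfs T \<theta> \<psi>) - integral\<^sup>L ?U (qcfs Tt \<theta> \<psi>)"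
    using assms abs_qcfs_le
    by (intro Bochner_Integration.integral_diff integrable_uniform_measure_Icc_bounded) auto
  also have "\<dots> = 0"
    unfolding \<psi> using assms by (simp add: integral_uniform_qcfs_half_shift)
  finally show "expectation (\<lambda>\<omega>. snn_rate T \<theta> \<psi> (Ivec \<omega>) - qcfs Tt \<theta> \<psi> (Z \<omega>)) = 0" .
qed

end
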